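(* Let $\{(x_i,y_i)\}_{i=1}^n\subset\mathcal X\times\mathcal Y$ be a dataset, let $\alpha\in(0,1)$, and let $\mathcal F$ be a nonempty family of deterministic classifiers $F:\mathcal X\to\mathcal Y$. For $F\in\mathcal F$ define the empirical zero-one risk $$\hat{\mathcal R}(F)=\frac1n\sum_{i=1}^n \mathbf 1_{\{F(x_i)\neq y_i\}}$$ and the $\alpha$-CVaR zero-one loss $$\mathrm{CVaR}_\alpha(F)=\max_{w\in\Delta_n,\ w_i\le \frac{1}{\alpha n}\ \forall i}\ \sum_{i=1}^n w_i\,\mathbf 1_{\{F(x_i)\neq y_i\}},$$ where $\Delta_n=\{w\in\mathbb R^n: w_i\ge 0,\ \sum_i w_i=1\}$. Let $F^*_{\mathrm{ERM}}=\arg\min_{F\in\mathcal F}\hat{\mathcal R}(F)$ and $F^*_{\mathrm{CVaR}_\alpha}=\arg\min_{F\in\mathcal F}\mathrm{CVaR}_\alpha(F)$. Then for every $F\in\mathcal F$ and every $F^*\in F^*_{\mathrm{ERM}}$ we have $\mathrm{CVaR}_\alpha(F)\ge \mathrm{CVaR}_\alpha(F^* )$. Moreover, if $\min_{F\in\mathcal F}\hat{\mathcal R}(F)<\alpha$, then $F^*_{\mathrm{ERM}}=F^*_{\mathrm{CVaR}_\alpha}$.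
   Context: A deterministic classifier is a fixed map $F:\mathcal X\to\mathcal Y$. The zero-one loss is $\ell_{0/1}(\hat y,y)=\mathbf 1_{\{\hat y\neq y\}}$. *)

theory Defs
  imports Complex_Main
begin

text \<open>Dataset: points xs i, labels ys i for i < n (0-based indexing of the paper's i = 1..n).\<close>

definition zero_one_loss :: "'y \<Rightarrow> 'y \<Rightarrow> real" where
  "zero_one_loss yhat y = (if yhat \<noteq> y then 1 else 0)"

definition emp_risk :: "nat \<Rightarrow> (nat \<Rightarrow> 'x) \<Rightarrow> (nat \<Rightarrow> 'y) \<Rightarrow> ('x \<Rightarrow> 'y) \<Rightarrow> real" where
  "emp_risk n xs ys F = (\<Sum>i<n. zero_one_loss (F (xs i)) (ys i)) / real n"

definition cvar_weights :: "real \<Rightarrow> nat \<Rightarrow> (nat \<Rightarrow> real) set" where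
  "cvar_weights \<alpha> n = {w. (\<forall>i<n. 0 \<le> w i \<and> w i \<le> 1 / (\<alpha> * real n)) \<and> (\<Sum>i<n. w i) = 1}"

definition cvar :: "real \<Rightarrow> nat \<Rightarrow> (nat \<Rightarrow> 'x) \<Rightarrow> (nat \<Rightarrow> 'y) \<Rightarrow> ('x \<Rightarrow> 'y) \<Rightarrow> real" where
  "cvar \<alpha> n xs ys F =
     Sup ((\<lambda>w. \<Sum>i<n. w i * zero_one_loss (F (xs i)) (ys i)) ` cvar_weights \<alpha> n)"

definition argmin_set :: "('a \<Rightarrow> real) \<Rightarrow> 'a set \<Rightarrow> 'a set" where
  "argmin_set f A = {a \<in> A. \<forall>b\<in>A. f a \<le> f b}"

end

theory Submission
  imports Defs
begin

(* For the zero-one loss with k misclassified points, the CVaR is the largest mass that a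
   distribution with point masses at most 1/(\<alpha> n) can place on those k points, namely
   min 1 (k/(\<alpha> n)) = min 1 (R/\<alpha>) for the empirical risk R. So CVaR is a nondecreasing
   function of the empirical risk, strictly increasing below \<alpha>: empirical risk minimisers
   minimise CVaR, and once some classifier has risk below \<alpha> every CVaR minimiser also has
   risk below \<alpha> and hence minimises the empirical risk. *)

lemma zero_one_loss_eq_of_bool: "zero_one_loss yhat y = of_bool (yhat \<noteq> y)"
  by (simp add: zero_one_loss_def)

lemma cvar_weights_sum_le:
  assumes "w \<in> cvar_weights \<alpha> n" and "E \<subseteq> {..<n}"
  shows "sum w E \<le> min 1 (real (card E) / (\<alpha> * real n))"
proof -
  have bounds: "\<And>i. i < n \<Longrightarrow> 0 \<le> w i \<and> w i \<le> 1 / (\<alpha> * real n)" and total: "(\<Sum>i<n. w i) = 1"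
    using assms(1) by (auto simp: cvar_weights_def)
  have "sum w E \<le> (\<Sum>i<n. w i)"
    using assms(2) bounds by (intro sum_mono2) auto
  moreover have "sum w E \<le> (\<Sum>i\<in>E. 1 / (\<alpha> * real n))"
    using assms(2) bounds by (intro sum_mono) auto
  ultimately show ?thesis
    using total by simp
qed

lemma cvar_weights_saturating:
  assumes "0 < \<alpha>" "\<alpha> \<le> 1" "0 < n" and E: "E \<subseteq> {..<n}"
  shows "\<exists>w\<in>cvar_weights \<alpha> n. sum w E = min 1 (real (card E) / (\<alpha> * real n))"
proof -
  define k where "k = real (card E)"
  define cap where "cap = 1 / (\<alpha> * real n)"
  have "finite E" and "card E \<le> n"
    using E finite_subset card_mono[OF _ E] by auto
  then have rest: "real (card ({..<n} - E)) = real n - k"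
    using E by (simp add: card_Diff_subset k_def of_nat_diff)
  have cap_pos: "0 < cap" and n_cap: "1 \<le> real n * cap"
    using assms by (auto simp: cap_def field_simps)
  have split: "(\<Sum>i<n. w i) = sum w E + sum w ({..<n} - E)" for w :: "nat \<Rightarrow> real"
    using E by (simp add: sum.subset_diff)
  show ?thesis
  proof (cases "k * cap \<le> 1")
    case True
    define c where "c = (1 - k * cap) / (real n - k)"
    define w where "w = (\<lambda>i. if i \<in> E then cap else c)"
    have "0 \<le> c" "c \<le> cap"
      using True n_cap \<open>card E \<le> n\<close> cap_pos
      by (auto simp: c_def k_def divide_le_eq algebra_simps)
    moreover have "sum w E = k * cap" "sum w ({..<n} - E) = 1 - k * cap"
      using rest True \<open>card E \<le> n\<close> n_cap by (auto simp: w_def k_def c_def)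
    ultimately have "w \<in> cvar_weights \<alpha> n"
      using cap_pos by (auto simp: cvar_weights_def w_def split cap_def)
    moreover have "sum w E = min 1 (k / (\<alpha> * real n))"
      using \<open>sum w E = k * cap\<close> True by (simp add: cap_def)
    ultimately show ?thesis by (auto simp: k_def)
  next
    case False
    define w where "w = (\<lambda>i. if i \<in> E then 1 / k else 0)"
    have "0 < k"
      using False by (auto simp: k_def intro!: gr0I)
    then have "sum w E = 1" "1 / k \<le> cap"
      using False by (auto simp: w_def k_def cap_def field_simps)
    then have "w \<in> cvar_weights \<alpha> n"
      using \<open>0 < k\<close> cap_pos by (auto simp: cvar_weights_def w_def split cap_def)
    moreover have "sum w E = min 1 (k / (\<alpha> * real n))"
      using \<open>sum w E = 1\<close> False by (simp add: cap_def)
    ultimately show ?thesis by (auto simp: k_def)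
  qed
qed

lemma Sup_cvar_weights_of_bool:
  assumes "0 < \<alpha>" "\<alpha> \<le> 1" "0 < n"
  shows "Sup ((\<lambda>w. \<Sum>i<n. w i * of_bool (P i)) ` cvar_weights \<alpha> n)
           = min 1 (real (card ({..<n} \<inter> {i. P i})) / (\<alpha> * real n))"
proof -
  define E where "E = {..<n} \<inter> {i. P i}"
  have E: "E \<subseteq> {..<n}" by (simp add: E_def)
  obtain w where "w \<in> cvar_weights \<alpha> n" "sum w E = min 1 (real (card E) / (\<alpha> * real n))"
    using cvar_weights_saturating[OF assms E] by blast
  then have "Sup ((\<lambda>w. sum w E) ` cvar_weights \<alpha> n) = min 1 (real (card E) / (\<alpha> * real n))"
    using cvar_weights_sum_le[OF _ E] by (intro cSup_eq_maximum) (force, auto)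
  then show ?thesis by (simp add: E_def)
qed

lemma emp_risk_eq_card:
  "emp_risk n xs ys F = real (card ({..<n} \<inter> {i. F (xs i) \<noteq> ys i})) / real n"
  by (simp add: emp_risk_def zero_one_loss_eq_of_bool)

lemma cvar_eq_min_emp_risk:
  assumes "0 < \<alpha>" "\<alpha> \<le> 1" "0 < n"
  shows "cvar \<alpha> n xs ys F = min 1 (emp_risk n xs ys F / \<alpha>)"
  using Sup_cvar_weights_of_bool[OF assms, of "\<lambda>i. F (xs i) \<noteq> ys i"]
  by (simp add: cvar_def zero_one_loss_eq_of_bool emp_risk_eq_card field_simps)

lemma argmin_set_mono_comp:
  assumes "mono g"
  shows "argmin_set f A \<subseteq> argmin_set (\<lambda>a. g (f a)) A"
  using assms by (auto simp: argmin_set_def mono_def)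

lemma argmin_set_comp_subset:
  assumes strict: "\<And>r s. r < t \<Longrightarrow> r < s \<Longrightarrow> g r < g s"
    and "a\<^sub>0 \<in> A" "f a\<^sub>0 < t"
  shows "argmin_set (\<lambda>a. g (f a)) A \<subseteq> argmin_set f A"
proof
  fix a assume "a \<in> argmin_set (\<lambda>a. g (f a)) A"
  then have "a \<in> A" and min: "\<And>b. b \<in> A \<Longrightarrow> g (f a) \<le> g (f b)"
    by (auto simp: argmin_set_def)
  have "f a < t"
    using strict[OF \<open>f a\<^sub>0 < t\<close>, of "f a"] min[OF \<open>a\<^sub>0 \<in> A\<close>] \<open>f a\<^sub>0 < t\<close> by fastforce
  then have "f a \<le> f b" if "b \<in> A" for b
    using strict[of "f b" "f a"] min[OF that] by fastforce
  with \<open>a \<in> A\<close> show "a \<in> argmin_set f A"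
    by (simp add: argmin_set_def)
qed

theorem proposition1:
  fixes n :: nat and xs :: "nat \<Rightarrow> 'x" and ys :: "nat \<Rightarrow> 'y"
    and \<alpha> :: real and \<F> :: "('x \<Rightarrow> 'y) set"
  assumes "n \<ge> 1" and "0 < \<alpha>" and "\<alpha> < 1" and "\<F> \<noteq> {}"
  shows "(\<forall>F\<in>\<F>. \<forall>Fs\<in>argmin_set (emp_risk n xs ys) \<F>.
            cvar \<alpha> n xs ys F \<ge> cvar \<alpha> n xs ys Fs) \<and>
         ((INF F\<in>\<F>. emp_risk n xs ys F) < \<alpha> \<longrightarrow>
           argmin_set (emp_risk n xs ys) \<F> = argmin_set (cvar \<alpha> n xs ys) \<F>)"
proof -
  define g where "g r = min 1 (r / \<alpha>)" for r
  have cvar: "cvar \<alpha> n xs ys = (\<lambda>F. g (emp_risk n xs ys F))"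
    using assms by (intro ext) (simp add: g_def cvar_eq_min_emp_risk)
  have "mono g"
    using \<open>0 < \<alpha>\<close> by (auto simp: g_def mono_def divide_right_mono min.coboundedI2)
  have g_strict: "g r < g s" if "r < \<alpha>" "r < s" for r s
    using that \<open>0 < \<alpha>\<close> by (auto simp: g_def divide_strict_right_mono)
  have "argmin_set (emp_risk n xs ys) \<F> \<subseteq> argmin_set (cvar \<alpha> n xs ys) \<F>"
    unfolding cvar by (rule argmin_set_mono_comp[OF \<open>mono g\<close>])
  moreover have "argmin_set (cvar \<alpha> n xs ys) \<F> \<subseteq> argmin_set (emp_risk n xs ys) \<F>"
    if inf_lt: "(INF F\<in>\<F>. emp_risk n xs ys F) < \<alpha>"
  proof -
    obtain F\<^sub>0 where "F\<^sub>0 \<in> \<F>" "emp_risk n xs ys F\<^sub>0 < \<alpha>"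
      using cInf_lessD[OF _ inf_lt] \<open>\<F> \<noteq> {}\<close> by auto
    with g_strict show ?thesis
      unfolding cvar by (rule argmin_set_comp_subset[where f = "emp_risk n xs ys"])
  qed
  ultimately show ?thesis
    by (auto simp: argmin_set_def)
qed

end
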